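(* Let $\dot G$ be a connected, non-complete, $5$-regular and $3$ net-regular SRSG belonging to $\mathcal C_1\cup\mathcal C_4\cup\mathcal C_5$ that contains no unbalanced triangle. Then $\dot G$ is isomorphic to $\dot S^2_{10}$ (parameters $(10,5,0,0,1)$) or to $\dot S^3_{10}$ (parameters $(10,5,3,0,-2)$).
   Context: A signed graph $\dot G=(G,\sigma)$ is a simple graph $G$ with $\sigma:E(G)\to\{\pm1\}$; adjacency matrix $A_{\dot G}$ has entries $\sigma(v_iv_j)$ for adjacent vertices, $0$ otherwise. Degree and connectedness refer to $G$; net-degree is $d^+(v)-d^-(v)$ (numbers of positive minus negative incident edges); $\rho$ net-regular means all net-degrees equal $\rho$. A triangle is unbalanced if the product of its edge signs is $-1$. $\dot G$ on $n$ vertices is an SRSG if it is neither homogeneous (all edges of one sign) complete nor edgeless and there are $r\in\mathbb N$, $a,b,c\in\mathbb Z$ with $(A^2_{\dot G})_{ii}=r$, $(A^2_{\dot G})_{ij}=a$ for positive edges, $b$ for negative edges, $c$ for distinct non-adjacent pairs; parameters $(n,r,a,b,c)$. Classes of inhomogeneous SRSGs: $\mathcal C_1$: $a=-b$ and (complete, or non-complete with $c\ne0$); $\mathcal C_4$: $a\ne-b$, non-complete, $c=0$; $\mathcal C_5$: $a\neq -b$, non-complete, $c\notin\{0,\frac{a+b}2\}$. $\dot S^2_{10}$ is $K_{5,5}$ with the edges of a perfect matching negative and all other edges positive. $\dot S^3_{10}$ is the union of two vertex-disjoint all-positive copies of $K_5$ on $\{u_1,\dots,u_5\}$ and $\{w_1,\dots,w_5\}$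 together with negative edges $u_tw_t$, $t=1,\dots,5$. *)

theory Defs
  imports Main
begin

text \<open>A signed graph on a finite vertex set V is encoded by its signed adjacency
  function s, i.e. s u v is the (u,v) entry of the adjacency matrix:
  s u v = 1 for a positive edge, -1 for a negative edge, 0 for a non-edge.\<close>

definition signed_graph :: "'a set \<Rightarrow> ('a \<Rightarrow> 'a \<Rightarrow> int) \<Rightarrow> bool" where
  "signed_graph V s \<longleftrightarrow> finite V \<and> (\<forall>u v. s u v = s v u) \<and> (\<forall>u. s u u = 0)
     \<and> (\<forall>u v. s u v \<in> {-1, 0, 1}) \<and> (\<forall>u v. u \<notin> V \<or> v \<notin> V \<longrightarrow> s u v = 0)"

definition adj :: "('a \<Rightarrow> 'a \<Rightarrow> int) \<Rightarrow> 'a \<Rightarrow> 'a \<Rightarrow> bool" where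
  "adj s u v \<longleftrightarrow> s u v \<noteq> 0"

definition A2 :: "'a set \<Rightarrow> ('a \<Rightarrow> 'a \<Rightarrow> int) \<Rightarrow> 'a \<Rightarrow> 'a \<Rightarrow> int" where
  "A2 V s u v = (\<Sum>w\<in>V. s u w * s w v)"

definition sg_complete :: "'a set \<Rightarrow> ('a \<Rightarrow> 'a \<Rightarrow> int) \<Rightarrow> bool" where
  "sg_complete V s \<longleftrightarrow> (\<forall>u\<in>V. \<forall>v\<in>V. u \<noteq> v \<longrightarrow> adj s u v)"

definition sg_edgeless :: "'a set \<Rightarrow> ('a \<Rightarrow> 'a \<Rightarrow> int) \<Rightarrow> bool" where
  "sg_edgeless V s \<longleftrightarrow> (\<forall>u\<in>V. \<forall>v\<in>V. \<not> adj s u v)"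

definition sg_homogeneous :: "'a set \<Rightarrow> ('a \<Rightarrow> 'a \<Rightarrow> int) \<Rightarrow> bool" where
  "sg_homogeneous V s \<longleftrightarrow> (\<forall>u\<in>V. \<forall>v\<in>V. s u v \<ge> 0) \<or> (\<forall>u\<in>V. \<forall>v\<in>V. s u v \<le> 0)"

definition degree :: "'a set \<Rightarrow> ('a \<Rightarrow> 'a \<Rightarrow> int) \<Rightarrow> 'a \<Rightarrow> nat" where
  "degree V s v = card {w\<in>V. adj s v w}"

definition net_degree :: "'a set \<Rightarrow> ('a \<Rightarrow> 'a \<Rightarrow> int) \<Rightarrow> 'a \<Rightarrow> int" where
  "net_degree V s v = int (card {w\<in>V. s v w = 1}) - int (card {w\<in>V. s v w = -1})"

definition regular :: "'a set \<Rightarrow> ('a \<Rightarrow> 'a \<Rightarrow> int) \<Rightarrow> nat \<Rightarrow> bool" where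
  "regular V s k \<longleftrightarrow> (\<forall>v\<in>V. degree V s v = k)"

definition net_regular :: "'a set \<Rightarrow> ('a \<Rightarrow> 'a \<Rightarrow> int) \<Rightarrow> int \<Rightarrow> bool" where
  "net_regular V s \<rho> \<longleftrightarrow> (\<forall>v\<in>V. net_degree V s v = \<rho>)"

definition sg_connected :: "'a set \<Rightarrow> ('a \<Rightarrow> 'a \<Rightarrow> int) \<Rightarrow> bool" where
  "sg_connected V s \<longleftrightarrow> (\<forall>u\<in>V. \<forall>v\<in>V. (\<lambda>x y. x \<in> V \<and> y \<in> V \<and> adj s x y)\<^sup>*\<^sup>* u v)"

definition has_unbalanced_triangle :: "'a set \<Rightarrow> ('a \<Rightarrow> 'a \<Rightarrow> int) \<Rightarrow> bool" where
  "has_unbalanced_triangle V s \<longleftrightarrow> (\<exists>u\<in>V. \<exists>v\<in>V. \<exists>w\<in>V.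
      adj s u v \<and> adj s v w \<and> adj s u w \<and> s u v * s v w * s u w = -1)"

definition SRSG :: "'a set \<Rightarrow> ('a \<Rightarrow> 'a \<Rightarrow> int) \<Rightarrow> nat \<Rightarrow> nat \<Rightarrow> int \<Rightarrow> int \<Rightarrow> int \<Rightarrow> bool" where
  "SRSG V s n r a b c \<longleftrightarrow> signed_graph V s \<and> card V = n
     \<and> \<not> (sg_homogeneous V s \<and> sg_complete V s) \<and> \<not> sg_edgeless V s
     \<and> (\<forall>i\<in>V. A2 V s i i = int r)
     \<and> (\<forall>i\<in>V. \<forall>j\<in>V. i \<noteq> j \<longrightarrow> s i j = 1 \<longrightarrow> A2 V s i j = a)
     \<and> (\<forall>i\<in>V. \<forall>j\<in>V. i \<noteq> j \<longrightarrow> s i j = -1 \<longrightarrow> A2 V s i j = b)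
     \<and> (\<forall>i\<in>V. \<forall>j\<in>V. i \<noteq> j \<longrightarrow> s i j = 0 \<longrightarrow> A2 V s i j = c)"

definition inhomogeneous :: "'a set \<Rightarrow> ('a \<Rightarrow> 'a \<Rightarrow> int) \<Rightarrow> bool" where
  "inhomogeneous V s \<longleftrightarrow> \<not> sg_homogeneous V s"

definition class_C1 :: "'a set \<Rightarrow> ('a \<Rightarrow> 'a \<Rightarrow> int) \<Rightarrow> int \<Rightarrow> int \<Rightarrow> int \<Rightarrow> bool" where
  "class_C1 V s a b c \<longleftrightarrow> inhomogeneous V s \<and> a = - b
     \<and> (sg_complete V s \<or> (\<not> sg_complete V s \<and> c \<noteq> 0))"

definition class_C4 :: "'a set \<Rightarrow> ('a \<Rightarrow> 'a \<Rightarrow> int) \<Rightarrow> int \<Rightarrow> int \<Rightarrow> int \<Rightarrow> bool" where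
  "class_C4 V s a b c \<longleftrightarrow> inhomogeneous V s \<and> a \<noteq> - b \<and> \<not> sg_complete V s \<and> c = 0"

definition class_C5 :: "'a set \<Rightarrow> ('a \<Rightarrow> 'a \<Rightarrow> int) \<Rightarrow> int \<Rightarrow> int \<Rightarrow> int \<Rightarrow> bool" where
  "class_C5 V s a b c \<longleftrightarrow> inhomogeneous V s \<and> a \<noteq> - b \<and> \<not> sg_complete V s
     \<and> c \<noteq> 0 \<and> 2 * c \<noteq> a + b"

definition sg_isomorphic :: "'a set \<Rightarrow> ('a \<Rightarrow> 'a \<Rightarrow> int) \<Rightarrow> 'b set \<Rightarrow> ('b \<Rightarrow> 'b \<Rightarrow> int) \<Rightarrow> bool" where
  "sg_isomorphic V s W t \<longleftrightarrow> (\<exists>f. bij_betw f V W \<and> (\<forall>u\<in>V. \<forall>v\<in>V. t (f u) (f v) = s u v))"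

text \<open>Vertices 0..4 are u_1..u_5, vertices 5..9 are w_1..w_5 (u_t = t-1, w_t = t+4).\<close>
definition V10 :: "nat set" where "V10 = {0..<10}"

definition S2_10 :: "nat \<Rightarrow> nat \<Rightarrow> int" where
  "S2_10 i j = (if i \<in> V10 \<and> j \<in> V10 \<and> (i < 5 \<longleftrightarrow> \<not> j < 5)
      then (if i = j + 5 \<or> j = i + 5 then -1 else 1) else 0)"

definition S3_10 :: "nat \<Rightarrow> nat \<Rightarrow> int" where
  "S3_10 i j = (if i \<in> V10 \<and> j \<in> V10 \<and> i \<noteq> j
      then (if (i < 5 \<longleftrightarrow> j < 5) then 1 else if i = j + 5 \<or> j = i + 5 then -1 else 0)
      else 0)"

end

theory Submission
  imports Defs
begin

text \<open>Degree 5 and net-degree 3 leave every vertex with four positive neighbours and a single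
  negative one, so the negative edges form a perfect matching v \<mapsto> mate v. Balanced
  triangles force v and mate v to have no common neighbour, and the common neighbours of a
  positive edge to be joined to it positively. Hence b = 0, a counts the common positive
  neighbours of a positive edge (so 0 \<le> a \<le> 3), and the row sums of A^2 give
  4a + c(n - 6) = 4 with n \<ge> 10.

  If a = 0 the graph is triangle-free and therefore K_5,5 with a negative perfect matching.
  If a = 1 then c = 0, so A commutes with the permutation matrix of the matching, and this
  produces a positive edge with two common neighbours. If a = 2 then c < 0, but two
  non-adjacent positive neighbours of a vertex have three common positive neighbours. If a = 3
  the closed positive neighbourhoods are disjoint 5-cliques, so 5 divides n, which forces
  c = -2, n = 10 and two cliques joined by the negative matching.\<close>

section \<open>Signed adjacency matrices\<close>

lemma sum_A2_assoc:
  "(\<Sum>w\<in>V. s u w * A2 V s w v) = (\<Sum>w\<in>V. A2 V s u w * s w v)"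
  unfolding A2_def by (simp add: sum_distrib_left sum_distrib_right mult.assoc) (rule sum.swap)

lemma sum_A2_row:
  assumes "\<And>w. w \<in> V \<Longrightarrow> (\<Sum>v\<in>V. s w v) = k" and "u \<in> V"
  shows "(\<Sum>v\<in>V. A2 V s u v) = k * k"
proof -
  have "(\<Sum>v\<in>V. A2 V s u v) = (\<Sum>w\<in>V. s u w * (\<Sum>v\<in>V. s w v))"
    unfolding A2_def by (simp add: sum_distrib_left) (rule sum.swap)
  also have "\<dots> = (\<Sum>w\<in>V. s u w) * k"
    using assms(1) by (simp add: sum_distrib_right)
  finally show ?thesis using assms by simp
qed

lemma signed_graph_cases:
  assumes "signed_graph V s"
  shows "s u v = -1 \<or> s u v = 0 \<or> s u v = 1"
  using assms unfolding signed_graph_def by auto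

lemma degree_eq_card_pos_plus_card_neg:
  assumes "signed_graph V s"
  shows "degree V s v = card {w\<in>V. s v w = 1} + card {w\<in>V. s v w = -1}"
proof -
  have "finite V" using assms unfolding signed_graph_def by simp
  moreover have "{w\<in>V. adj s v w} = {w\<in>V. s v w = 1} \<union> {w\<in>V. s v w = -1}"
    using signed_graph_cases[OF assms] unfolding adj_def by force
  ultimately show ?thesis unfolding degree_def by (simp add: card_Un_disjoint disjoint_iff)
qed

lemma sum_eq_net_degree:
  assumes "signed_graph V s"
  shows "(\<Sum>v\<in>V. s u v) = net_degree V s u"
proof -
  have "finite V" using assms unfolding signed_graph_def by simp
  have "(\<Sum>v\<in>V. s u v) = (\<Sum>v\<in>V. of_bool (s u v = 1) - of_bool (s u v = -1))"
    by (rule sum.cong) (use signed_graph_cases[OF assms, of u] in auto)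
  also have "\<dots> = net_degree V s u"
    using \<open>finite V\<close> unfolding net_degree_def by (simp add: sum_subtractf Int_def)
  finally show ?thesis .
qed

lemma SRSG_A2:
  assumes "SRSG V s n r a b c" and "i \<in> V" and "j \<in> V"
  shows "A2 V s i j = (if i = j then int r else if s i j = 1 then a else if s i j = -1 then b else c)"
  using assms signed_graph_cases[of V s i j] unfolding SRSG_def by auto

section \<open>Two-block signed graphs on ten vertices\<close>

definition two_block_sg :: "int \<Rightarrow> int \<Rightarrow> nat \<Rightarrow> nat \<Rightarrow> int" where
  "two_block_sg e d i j = (if i \<in> V10 \<and> j \<in> V10 \<and> i \<noteq> j
     then (if (i < 5 \<longleftrightarrow> j < 5) then e else if i = j + 5 \<or> j = i + 5 then -1 else d) else 0)"

lemma S2_10_eq_two_block: "S2_10 = two_block_sg 0 1"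
  by (auto simp: fun_eq_iff S2_10_def two_block_sg_def)

lemma S3_10_eq_two_block: "S3_10 = two_block_sg 1 0"
  by (auto simp: fun_eq_iff S3_10_def two_block_sg_def)

lemma sg_isomorphicI_inverse:
  assumes h: "bij_betw h W V"
    and t: "\<And>i j. i \<in> W \<Longrightarrow> j \<in> W \<Longrightarrow> t i j = s (h i) (h j)"
  shows "sg_isomorphic V s W t"
proof -
  let ?f = "inv_into W h"
  have f: "bij_betw ?f V W" using h by (rule bij_betw_inv_into)
  have "t (?f u) (?f v) = s u v" if "u \<in> V" "v \<in> V" for u v
  proof -
    have "?f u \<in> W" "?f v \<in> W" using f that by (auto dest: bij_betwE)
    then show ?thesis using t bij_betw_inv_into_right[OF h] that by simp
  qed
  with f show ?thesis unfolding sg_isomorphic_def by blast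
qed

lemma bij_betw_two_block_index:
  fixes g :: "nat \<Rightarrow> 'a"
  assumes g: "bij_betw g {0..<5} X" and inj_m: "inj_on m X" and disj: "X \<inter> m ` X = {}"
  shows "bij_betw (\<lambda>i. if i < 5 then g i else m (g (i - 5))) V10 (X \<union> m ` X)"
    (is "bij_betw ?h _ _")
proof -
  have "bij_betw ?h {0..<5} X" using g by (rule bij_betw_cong[THEN iffD1, rotated]) simp
  moreover have "bij_betw ?h {5..<10} (m ` X)"
  proof -
    have "bij_betw (\<lambda>i. i - 5) {5..<10} {0..<(5::nat)}"
      by (rule bij_betw_byWitness[where f' = "\<lambda>i. i + 5"]) auto
    then have "bij_betw (m \<circ> g \<circ> (\<lambda>i. i - 5)) {5..<10} (m ` X)"
      using g inj_on_imp_bij_betw[OF inj_m] by (blast intro: bij_betw_trans)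
    then show ?thesis by (rule bij_betw_cong[THEN iffD1, rotated]) simp
  qed
  ultimately have "bij_betw ?h ({0..<5} \<union> {5..<10}) (X \<union> m ` X)"
    using bij_betw_combine[OF _ _ disj] by blast
  then show ?thesis by (simp add: V10_def ivl_disj_un)
qed

lemma sg_isomorphic_two_block:
  assumes sg: "signed_graph V s" and card_X: "card X = 5" and inj_m: "inj_on m X"
    and V_eq: "V = X \<union> m ` X" and disj: "X \<inter> m ` X = {}"
    and in_X: "\<And>x y. x \<in> X \<Longrightarrow> y \<in> X \<Longrightarrow> x \<noteq> y \<Longrightarrow> s x y = e"
    and in_mX: "\<And>x y. x \<in> X \<Longrightarrow> y \<in> X \<Longrightarrow> x \<noteq> y \<Longrightarrow> s (m x) (m y) = e"
    and across: "\<And>x y. x \<in> X \<Longrightarrow> y \<in> X \<Longrightarrow> s x (m y) = (if x = y then -1 else d)"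
  shows "sg_isomorphic V s V10 (two_block_sg e d)"
proof -
  obtain g where g: "bij_betw g {0..<5::nat} X"
    using ex_bij_betw_nat_finite[of X] card_X card.infinite by force
  define h where "h i = (if i < 5 then g i else m (g (i - 5)))" for i
  have "bij_betw h V10 V"
    using bij_betw_two_block_index[OF g inj_m disj] V_eq unfolding h_def by simp
  moreover have "two_block_sg e d i j = s (h i) (h j)" if "i \<in> V10" "j \<in> V10" for i j
  proof -
    have g_eq: "g i = g j \<longleftrightarrow> i = j" if "i < 5" "j < 5" for i j
      using g that by (auto simp: bij_betw_def inj_on_def)
    have gX: "i < 5 \<Longrightarrow> g i \<in> X" for i using g by (auto simp: bij_betw_def)
    have sym: "s x y = s y x" and diag: "s x x = 0" for x y
      using sg unfolding signed_graph_def by simp_all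
    have cross: "s (g k) (m (g l)) = (if k = l then -1 else d)" if "k < 5" "l < 5" for k l
      using across[OF gX gX] g_eq that by simp
    have i10: "i < 10" and j10: "j < 10" using that by (simp_all add: V10_def)
    consider "i = j" | "i \<noteq> j" "i < 5" "j < 5" | "i < 5" "\<not> j < 5" | "\<not> i < 5" "j < 5"
      | "i \<noteq> j" "\<not> i < 5" "\<not> j < 5" by blast
    then show ?thesis
    proof cases
      case 1
      then show ?thesis by (simp add: two_block_sg_def diag)
    next
      case 2
      then show ?thesis using that in_X gX g_eq by (simp add: two_block_sg_def h_def)
    next
      case 3
      then show ?thesis using that cross[of i "j - 5"] j10 by (auto simp: two_block_sg_def h_def)
    next
      case 4
      then show ?thesis using that cross[of j "i - 5"] i10 sym by (auto simp: two_block_sg_def h_def)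
    next
      case 5
      then show ?thesis using that in_mX gX g_eq[of "i - 5" "j - 5"] i10 j10
        by (simp add: two_block_sg_def h_def)
    qed
  qed
  ultimately show ?thesis by (rule sg_isomorphicI_inverse)
qed

section \<open>Negative perfect matchings with balanced triangles\<close>

locale neg_matching_sg =
  fixes V :: "'a set" and s :: "'a \<Rightarrow> 'a \<Rightarrow> int"
  assumes signed_graph: "signed_graph V s"
    and one_neg_nbr: "\<And>v. v \<in> V \<Longrightarrow> card {w\<in>V. s v w = -1} = 1"
    and balanced_triangles: "\<not> has_unbalanced_triangle V s"
begin

lemma finite_V: "finite V"
  using signed_graph unfolding signed_graph_def by simp

lemma sym: "s u v = s v u"
  using signed_graph unfolding signed_graph_def by simp

lemma zero_diag [simp]: "s u u = 0"
  using signed_graph unfolding signed_graph_def by simp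

lemma s_cases: "s u v = -1 \<or> s u v = 0 \<or> s u v = 1"
  using signed_graph_cases[OF signed_graph] .

lemma adjacent_in_V: "s u v \<noteq> 0 \<Longrightarrow> u \<in> V \<and> v \<in> V"
  using signed_graph unfolding signed_graph_def by auto

definition pos_nbrs :: "'a \<Rightarrow> 'a set" where
  "pos_nbrs v = {w\<in>V. s v w = 1}"

definition nbrs :: "'a \<Rightarrow> 'a set" where
  "nbrs v = {w\<in>V. adj s v w}"

definition mate :: "'a \<Rightarrow> 'a" where
  "mate v = (THE w. s v w = -1)"

lemma finite_pos_nbrs [simp]: "finite (pos_nbrs v)"
  unfolding pos_nbrs_def using finite_V by simp

lemma pos_nbrs_iff: "w \<in> pos_nbrs v \<longleftrightarrow> s v w = 1"
  unfolding pos_nbrs_def using adjacent_in_V[of v w] by auto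

lemma nbrs_iff: "w \<in> nbrs v \<longleftrightarrow> s v w \<noteq> 0"
  unfolding nbrs_def adj_def using adjacent_in_V[of v w] by auto

lemma neg_iff_mate:
  assumes "v \<in> V"
  shows "s v w = -1 \<longleftrightarrow> w = mate v"
proof -
  obtain x where x: "{w\<in>V. s v w = -1} = {x}"
    using one_neg_nbr[OF assms] by (rule card_1_singletonE)
  have neg_iff: "s v w = -1 \<longleftrightarrow> w = x" for w
    using x adjacent_in_V[of v w] by (metis (mono_tags) mem_Collect_eq neg_equal_0_iff_equal
        one_neq_zero singleton_iff)
  then have "mate v = x" unfolding mate_def by simp
  then show ?thesis using neg_iff by simp
qed

lemma mate_neg: "v \<in> V \<Longrightarrow> s v (mate v) = -1"
  using neg_iff_mate by simp

lemma mate_in_V: "v \<in> V \<Longrightarrow> mate v \<in> V"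
  using mate_neg adjacent_in_V by (metis neg_equal_0_iff_equal one_neq_zero)

lemma mate_mate [simp]: "v \<in> V \<Longrightarrow> mate (mate v) = v"
  using mate_neg mate_in_V neg_iff_mate sym by metis

lemma mate_neq: "v \<in> V \<Longrightarrow> mate v \<noteq> v"
  using mate_neg by force

lemma mate_eq_iff: "u \<in> V \<Longrightarrow> v \<in> V \<Longrightarrow> mate u = mate v \<longleftrightarrow> u = v"
  using mate_mate by metis

lemma inj_on_mate: "A \<subseteq> V \<Longrightarrow> inj_on mate A"
  using mate_eq_iff by (meson inj_onI subsetD)

lemma triangle_balanced:
  assumes "s u v \<noteq> 0" and "s v w \<noteq> 0" and "s u w \<noteq> 0"
  shows "s u v * s v w * s u w = 1"
proof -
  have "s u v * s v w * s u w \<noteq> -1"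
    using balanced_triangles assms adjacent_in_V
    unfolding has_unbalanced_triangle_def adj_def by blast
  then show ?thesis using s_cases[of u v] s_cases[of v w] s_cases[of u w] assms by auto
qed

text \<open>A triangle through the negative edge v (mate v) would need a second negative edge at v
  or at mate v.\<close>
lemma mate_no_common_nbr:
  assumes "v \<in> V" and "s v w \<noteq> 0"
  shows "s (mate v) w = 0"
proof (rule ccontr)
  assume mate_w: "s (mate v) w \<noteq> 0"
  then have "s v (mate v) * s (mate v) w * s v w = 1"
    using triangle_balanced[of v "mate v" w] assms(2) mate_neg[OF assms(1)] by simp
  then have "s (mate v) w = -1 \<or> s v w = -1"
    using mate_neg[OF assms(1)] s_cases[of "mate v" w] s_cases[of v w] by auto
  then show False
    using assms mate_w neg_iff_mate[of "mate v" w] neg_iff_mate[of v w] mate_in_V by auto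
qed

lemma nbrs_mate_disjoint: "v \<in> V \<Longrightarrow> nbrs v \<inter> nbrs (mate v) = {}"
  using mate_no_common_nbr sym by (auto simp: nbrs_iff)

lemma common_nbr_of_pos_edge:
  assumes "s u v = 1" and "s u w \<noteq> 0" and "s w v \<noteq> 0"
  shows "s u w = 1 \<and> s w v = 1"
proof (rule ccontr)
  have "s u w * s w v = 1"
    using triangle_balanced[of u w v] assms by simp
  moreover assume "\<not> (s u w = 1 \<and> s w v = 1)"
  ultimately have "s u w = -1" "s v w = -1"
    using s_cases[of u w] s_cases[of w v] sym[of w v] by auto
  then have "u = v"
    using neg_iff_mate mate_mate adjacent_in_V by (metis neg_equal_0_iff_equal one_neq_zero)
  then show False using assms(1) by simp
qed

lemma s_eq_of_bool:
  assumes "v \<in> V"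
  shows "s w v = of_bool (w \<in> pos_nbrs v) - of_bool (w = mate v)"
  using s_cases[of v w] sym[of v w] neg_iff_mate[OF assms, of w] pos_nbrs_iff[of w v]
  by auto

lemma A2_eq_card:
  assumes u: "u \<in> V" and v: "v \<in> V"
  shows "A2 V s u v = int (card (pos_nbrs u \<inter> pos_nbrs v)) - of_bool (mate v \<in> pos_nbrs u)
    - of_bool (mate u \<in> pos_nbrs v) + of_bool (u = v)"
proof -
  have "A2 V s u v = (\<Sum>w\<in>V. (of_bool (w \<in> pos_nbrs u) - of_bool (w = mate u)) * s w v)"
    unfolding A2_def using s_eq_of_bool[OF u] sym by (metis (no_types, lifting))
  also have "\<dots> = (\<Sum>w\<in>pos_nbrs u. s w v) - s (mate u) v"
    using finite_V mate_in_V[OF u]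
    by (simp add: sum_subtractf left_diff_distrib Int_def pos_nbrs_def Collect_conv_if)
  also have "(\<Sum>w\<in>pos_nbrs u. s w v)
      = (\<Sum>w\<in>pos_nbrs u. of_bool (w \<in> pos_nbrs v) - of_bool (w = mate v))"
    using s_eq_of_bool[OF v] by simp
  also have "\<dots> = int (card (pos_nbrs u \<inter> pos_nbrs v)) - of_bool (mate v \<in> pos_nbrs u)"
    by (simp add: sum_subtractf Int_def Collect_conv_if)
  also have "s (mate u) v = of_bool (mate u \<in> pos_nbrs v) - of_bool (u = v)"
    using s_eq_of_bool[OF v] mate_eq_iff[OF u v] by simp
  finally show ?thesis by simp
qed

lemma mate_notin_pos_nbrs:
  assumes "v \<in> V" and "s v u \<noteq> 0"
  shows "mate v \<notin> pos_nbrs u"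
  using mate_no_common_nbr[OF assms] sym[of u "mate v"] by (simp add: pos_nbrs_iff)

lemma A2_pos_edge:
  assumes "s u v = 1"
  shows "A2 V s u v = int (card (pos_nbrs u \<inter> pos_nbrs v))"
proof -
  have "u \<in> V" "v \<in> V" "u \<noteq> v" using assms adjacent_in_V[of u v] by auto
  moreover have "mate v \<notin> pos_nbrs u" "mate u \<notin> pos_nbrs v"
    using mate_notin_pos_nbrs assms sym[of u v] calculation by auto
  ultimately show ?thesis using A2_eq_card by simp
qed

lemma A2_mate:
  assumes "u \<in> V"
  shows "A2 V s u (mate u) = 0"
proof -
  have "pos_nbrs u \<inter> pos_nbrs (mate u) = {}"
    using mate_no_common_nbr[OF assms] by (force simp: pos_nbrs_iff)
  moreover have "u \<notin> pos_nbrs u" "mate u \<notin> pos_nbrs (mate u)" "u \<noteq> mate u"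
    using mate_neq[OF assms] by (auto simp: pos_nbrs_iff)
  ultimately show ?thesis using A2_eq_card[OF assms mate_in_V[OF assms]] assms by simp
qed

lemma A2_diag:
  assumes "u \<in> V"
  shows "A2 V s u u = int (card (pos_nbrs u)) + 1"
  using A2_eq_card[OF assms assms] mate_neg[OF assms] by (simp add: pos_nbrs_iff)

end

section \<open>Degree 5 and net-degree 3\<close>

locale deg5_net3_sg =
  fixes V :: "'a set" and s :: "'a \<Rightarrow> 'a \<Rightarrow> int"
  assumes signed_graph: "signed_graph V s"
    and regular: "regular V s 5"
    and net_regular: "net_regular V s 3"
    and balanced_triangles: "\<not> has_unbalanced_triangle V s"
begin

lemma card_pos_neg_nbrs:
  assumes "v \<in> V"
  shows "card {w\<in>V. s v w = 1} = 4" and "card {w\<in>V. s v w = -1} = 1"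
  using degree_eq_card_pos_plus_card_neg[OF signed_graph, of v]
    regular net_regular assms unfolding regular_def net_regular_def net_degree_def by auto

end

sublocale deg5_net3_sg \<subseteq> neg_matching_sg
  using signed_graph card_pos_neg_nbrs(2) balanced_triangles by unfold_locales

context deg5_net3_sg
begin

lemma card_pos_nbrs: "v \<in> V \<Longrightarrow> card (pos_nbrs v) = 4"
  using card_pos_neg_nbrs(1) unfolding pos_nbrs_def .

lemma ex_pos_nbr: "v \<in> V \<Longrightarrow> \<exists>x. x \<in> pos_nbrs v"
  using card_pos_nbrs[of v] by (metis card.empty ex_in_conv zero_neq_numeral)

lemma card_nbrs: "v \<in> V \<Longrightarrow> card (nbrs v) = 5"
  using regular unfolding regular_def degree_def nbrs_def by simp

lemma A2_row_sum: "u \<in> V \<Longrightarrow> (\<Sum>v\<in>V. A2 V s u v) = 9"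
  using sum_A2_row[of V s 3] sum_eq_net_degree[OF signed_graph] net_regular
  unfolding net_regular_def by simp

lemma ten_le_card_V:
  assumes "u \<in> V"
  shows "10 \<le> card V"
proof -
  have "card (nbrs u \<union> nbrs (mate u)) = 10"
    using nbrs_mate_disjoint[OF assms] card_nbrs assms mate_in_V[OF assms] finite_V
    by (simp add: card_Un_disjoint nbrs_def)
  moreover have "nbrs u \<union> nbrs (mate u) \<subseteq> V" unfolding nbrs_def by auto
  ultimately show ?thesis using card_mono[OF finite_V] by metis
qed

end

locale deg5_net3_srsg = deg5_net3_sg +
  fixes n r :: nat and a b c :: int
  assumes srsg: "SRSG V s n r a b c"
begin

lemma card_V: "card V = n"
  using srsg unfolding SRSG_def by simp

lemma ex_vertex: "\<exists>u. u \<in> V"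
  using srsg unfolding SRSG_def sg_edgeless_def by auto

lemma ten_le_n: "10 \<le> n"
  using ex_vertex ten_le_card_V card_V by auto

lemma r_eq: "r = 5"
  using ex_vertex A2_diag card_pos_nbrs SRSG_A2[OF srsg] by fastforce

lemma b_eq: "b = 0"
proof -
  obtain u where u: "u \<in> V" using ex_vertex ..
  show ?thesis
    using SRSG_A2[OF srsg u mate_in_V[OF u]] A2_mate[OF u] mate_neq[OF u] mate_neg[OF u] by simp
qed

lemma A2_param:
  assumes "i \<in> V" and "j \<in> V"
  shows "A2 V s i j =
    (if i = j then 5 else c + (a - c) * of_bool (s i j = 1) - c * of_bool (s i j = -1))"
  using SRSG_A2[OF srsg assms] r_eq b_eq by auto

lemma a_eq_card: "s u v = 1 \<Longrightarrow> a = int (card (pos_nbrs u \<inter> pos_nbrs v))"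
  using SRSG_A2[OF srsg] A2_pos_edge adjacent_in_V by (metis one_neq_zero zero_diag)

lemma a_bounds: "0 \<le> a \<and> a \<le> 3"
proof -
  obtain u where u: "u \<in> V" using ex_vertex ..
  then obtain x where x: "x \<in> pos_nbrs u"
    using ex_pos_nbr by blast
  have "pos_nbrs u \<inter> pos_nbrs x \<subseteq> pos_nbrs u - {x}" by (auto simp: pos_nbrs_iff)
  then have "card (pos_nbrs u \<inter> pos_nbrs x) \<le> 3"
    using card_mono[of "pos_nbrs u - {x}"] card_pos_nbrs[OF u] x by fastforce
  then show ?thesis using a_eq_card x by (simp add: pos_nbrs_iff)
qed

lemma row_identity: "4 * a + c * (int n - 6) = 4"
proof -
  obtain u where u: "u \<in> V" using ex_vertex ..
  have "(\<Sum>v\<in>V. A2 V s u v) = 5 + (\<Sum>v\<in>V - {u}. A2 V s u v)"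
    using u finite_V A2_param[OF u u] by (simp add: sum.remove)
  also have "(\<Sum>v\<in>V - {u}. A2 V s u v)
      = (\<Sum>v\<in>V - {u}. c + (a - c) * of_bool (s u v = 1) - c * of_bool (s u v = -1))"
    using A2_param[OF u] by (intro sum.cong) auto
  also have "\<dots> = c * int (n - 1) + (a - c) * 4 - c"
  proof -
    have "(V - {u}) \<inter> {v. s u v = 1} = pos_nbrs u" "(V - {u}) \<inter> {v. s u v = -1} = {mate u}"
      using neg_iff_mate[OF u] mate_in_V[OF u] mate_neq[OF u] by (auto simp: pos_nbrs_def)
    then show ?thesis
      using finite_V card_pos_nbrs[OF u] card_V u
      by (simp add: sum.distrib sum_subtractf sum_distrib_left[symmetric])
  qed
  finally show ?thesis using A2_row_sum[OF u] ten_le_n by (simp add: of_nat_diff algebra_simps)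
qed

subsection \<open>The case a = 0\<close>

lemma triangle_free_if_a0:
  assumes a: "a = 0" and uv: "s u v \<noteq> 0" and uw: "s u w \<noteq> 0"
  shows "s v w = 0"
proof (rule ccontr)
  assume vw: "s v w \<noteq> 0"
  have u: "u \<in> V" using adjacent_in_V uv by blast
  consider "s u v = 1" | "v = mate u" using s_cases[of u v] uv neg_iff_mate[OF u] by auto
  then show False
  proof cases
    case 1
    then have "w \<in> pos_nbrs u \<inter> pos_nbrs v"
      using common_nbr_of_pos_edge[OF 1 uw] vw sym[of v w] by (auto simp: pos_nbrs_iff)
    then show False using a_eq_card[OF 1] a by auto
  next
    case 2
    then show False using mate_no_common_nbr[OF u uw] vw by simp
  qed
qed

lemma n_c_if_a0:
  assumes "a = 0"
  shows "n = 10 \<and> c = 1"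
proof -
  have prod: "c * (int n - 6) = 4" using row_identity assms by simp
  moreover have "int n - 6 \<ge> 4" using ten_le_n by simp
  ultimately have "c > 0" using mult_nonpos_nonneg[of c "int n - 6"] by linarith
  then have "1 * (int n - 6) \<le> c * (int n - 6)"
    using ten_le_n by (intro mult_right_mono) auto
  then show ?thesis using prod ten_le_n by simp
qed

lemma V_eq_nbrs_Un_if_a0:
  assumes "a = 0" and u: "u \<in> V"
  shows "V = nbrs u \<union> nbrs (mate u)"
proof (rule card_subset_eq[OF finite_V, symmetric])
  show "nbrs u \<union> nbrs (mate u) \<subseteq> V" unfolding nbrs_def by auto
  show "card (nbrs u \<union> nbrs (mate u)) = card V"
    using nbrs_mate_disjoint[OF u] card_nbrs u mate_in_V[OF u] finite_V n_c_if_a0[OF assms(1)]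
    by (simp add: card_Un_disjoint nbrs_def card_V)
qed

lemma nbrs_of_nbr_if_a0:
  assumes a: "a = 0" and u: "u \<in> V" and x: "x \<in> nbrs u"
  shows "nbrs x = nbrs (mate u)"
proof (rule card_subset_eq)
  have "nbrs x \<inter> nbrs u = {}"
    using triangle_free_if_a0[OF a, of u x] x by (auto simp: nbrs_iff)
  moreover have "nbrs x \<subseteq> nbrs u \<union> nbrs (mate u)"
    using V_eq_nbrs_Un_if_a0[OF a u] nbrs_def by blast
  ultimately show "nbrs x \<subseteq> nbrs (mate u)" by blast
  show "card (nbrs x) = card (nbrs (mate u))"
    using card_nbrs u mate_in_V x by (simp add: nbrs_def)
qed (simp add: nbrs_def finite_V)

lemma mate_image_nbrs_if_a0:
  assumes a: "a = 0" and u: "u \<in> V"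
  shows "mate ` nbrs (mate u) = nbrs u"
proof (rule card_subset_eq)
  have "mate x \<in> nbrs u" if "x \<in> nbrs (mate u)" for x
  proof -
    have "x \<in> V" using that by (simp add: nbrs_def)
    then have "mate x \<in> nbrs x" using mate_neg by (simp add: nbrs_iff)
    then show ?thesis using nbrs_of_nbr_if_a0[OF a mate_in_V[OF u] that] u by simp
  qed
  then show "mate ` nbrs (mate u) \<subseteq> nbrs u" by blast
  show "card (mate ` nbrs (mate u)) = card (nbrs u)"
    using card_image[OF inj_on_mate] card_nbrs u mate_in_V[OF u] by (simp add: nbrs_def)
qed (simp add: nbrs_def finite_V)

lemma S2_if_a0:
  assumes a: "a = 0"
  shows "sg_isomorphic V s V10 S2_10 \<and> n = 10 \<and> c = 1"
proof -
  obtain u where u: "u \<in> V" using ex_vertex ..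
  let ?X = "nbrs (mate u)"
  have X_V: "?X \<subseteq> V" unfolding nbrs_def by blast
  have mate_X: "mate ` ?X = nbrs u" using mate_image_nbrs_if_a0[OF a u] .
  have "sg_isomorphic V s V10 (two_block_sg 0 1)"
  proof (rule sg_isomorphic_two_block)
    show "card ?X = 5" using card_nbrs mate_in_V[OF u] .
    show "inj_on mate ?X" using inj_on_mate[OF X_V] .
    show "V = ?X \<union> mate ` ?X" using V_eq_nbrs_Un_if_a0[OF a u] mate_X by blast
    show "?X \<inter> mate ` ?X = {}" using nbrs_mate_disjoint[OF u] mate_X by blast
    show "s x y = 0" if "x \<in> ?X" "y \<in> ?X" "x \<noteq> y" for x y
      using triangle_free_if_a0[OF a, of "mate u" x y] that by (simp add: nbrs_iff)
    show "s (mate x) (mate y) = 0" if "x \<in> ?X" "y \<in> ?X" "x \<noteq> y" for x y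
    proof -
      have "mate x \<in> nbrs u" "mate y \<in> nbrs u" using mate_X that by blast+
      then show ?thesis
        using triangle_free_if_a0[OF a, of u "mate x" "mate y"] by (simp add: nbrs_iff)
    qed
    show "s x (mate y) = (if x = y then -1 else 1)" if "x \<in> ?X" "y \<in> ?X" for x y
    proof -
      have "x \<in> V" "y \<in> V" using X_V that by blast+
      moreover have "mate y \<in> nbrs x"
        using nbrs_of_nbr_if_a0[OF a mate_in_V[OF u] that(1)] mate_X that(2) u by auto
      ultimately show ?thesis
        using s_cases[of x "mate y"] neg_iff_mate[of x "mate y"] mate_eq_iff[of y x]
        by (auto simp: nbrs_iff)
    qed
  qed (rule signed_graph)
  then show ?thesis using S2_10_eq_two_block n_c_if_a0[OF a] by simp
qed

subsection \<open>The case a = 1\<close>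

lemma c_eq_0_if_a1: "a = 1 \<Longrightarrow> c = 0"
  using row_identity ten_le_n by simp

lemma A2_if_a1:
  assumes a: "a = 1" and w: "w \<in> V" and v: "v \<in> V"
  shows "A2 V s w v = 5 * of_bool (w = v) + s w v + of_bool (w = mate v)"
  using A2_param[OF w v] c_eq_0_if_a1[OF a] a s_cases[of w v] sym[of v w]
    neg_iff_mate[OF v, of w] mate_neq[OF v]
  by auto

text \<open>With a = 1 and c = 0 the SRSG condition reads A^2 = 5 I + A + M, where M is the
  permutation matrix of the negative matching; since A commutes with A^2, it commutes with M.\<close>
lemma mate_commute_if_a1:
  assumes a: "a = 1" and u: "u \<in> V" and v: "v \<in> V"
  shows "s u (mate v) = s (mate u) v"
proof -
  have "(\<Sum>w\<in>V. s u w * A2 V s w v)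
      = (\<Sum>w\<in>V. 5 * (s u w * of_bool (w = v)) + s u w * s w v + s u w * of_bool (w = mate v))"
    using A2_if_a1[OF a _ v] by (intro sum.cong) (auto simp: algebra_simps)
  also have "\<dots> = 5 * s u v + A2 V s u v + s u (mate v)"
    using v mate_in_V[OF v] finite_V
    by (simp add: sum.distrib A2_def sum_distrib_left[symmetric] Collect_conv_if)
  finally have left: "(\<Sum>w\<in>V. s u w * A2 V s w v) = 5 * s u v + A2 V s u v + s u (mate v)" .
  have "(\<Sum>w\<in>V. A2 V s u w * s w v)
      = (\<Sum>w\<in>V. 5 * (of_bool (w = u) * s w v) + s u w * s w v + of_bool (w = mate u) * s w v)"
    using A2_if_a1[OF a u] mate_eq_iff mate_mate u
    by (intro sum.cong) (auto simp: algebra_simps)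
  also have "\<dots> = 5 * s u v + A2 V s u v + s (mate u) v"
    using u mate_in_V[OF u] finite_V
    by (simp add: sum.distrib A2_def sum_distrib_left[symmetric] Collect_conv_if)
  finally show ?thesis using left sum_A2_assoc[where V = V and s = s and u = u and v = v] by simp
qed

lemma pos_nbrs_diff_subset_if_a1:
  assumes a: "a = 1" and x: "x \<in> pos_nbrs u" and y: "y \<in> pos_nbrs u" and xy: "s x y = 1"
  shows "pos_nbrs u - {x, y} \<subseteq> pos_nbrs (mate x)"
proof -
  have u: "u \<in> V" and xV: "x \<in> V" and ux: "s u x = 1" and "x \<noteq> y"
    using x y xy adjacent_in_V[of u x] by (auto simp: pos_nbrs_iff)
  have mx: "mate x \<in> V" using mate_in_V[OF xV] .
  have "s u (mate x) = 0" "u \<noteq> mate x"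
    using mate_no_common_nbr[OF xV, of u] mate_neg[OF xV] ux sym[of u x] sym[of u "mate x"] by auto
  then have "A2 V s u (mate x) = 0"
    using A2_param[OF u mx] c_eq_0_if_a1[OF a] by simp
  moreover have "s (mate u) (mate x) = 1"
    using mate_commute_if_a1[OF a u mx] ux xV by simp
  ultimately have two: "card (pos_nbrs u \<inter> pos_nbrs (mate x)) = 2"
    using A2_eq_card[OF u mx] x xV \<open>u \<noteq> mate x\<close> sym[of "mate x" "mate u"]
    by (simp add: pos_nbrs_iff)
  have "pos_nbrs u \<inter> pos_nbrs (mate x) \<subseteq> pos_nbrs u - {x, y}"
    using mate_neg[OF xV] mate_no_common_nbr[OF xV, of y] xy sym[of x "mate x"]
    by (auto simp: pos_nbrs_iff)
  moreover have "card (pos_nbrs u - {x, y}) = 2"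
    using card_pos_nbrs[OF u] x y \<open>x \<noteq> y\<close> by (simp add: card_Diff_subset)
  ultimately have "pos_nbrs u \<inter> pos_nbrs (mate x) = pos_nbrs u - {x, y}"
    using two by (intro card_subset_eq) auto
  then show ?thesis by blast
qed

lemma a_neq_1: "a \<noteq> 1"
proof
  assume a: "a = 1"
  obtain u where u: "u \<in> V" using ex_vertex ..
  then obtain x where x: "x \<in> pos_nbrs u"
    using ex_pos_nbr by blast
  then have ux: "s u x = 1" by (simp add: pos_nbrs_iff)
  then obtain y where y: "y \<in> pos_nbrs u \<inter> pos_nbrs x"
    using a_eq_card a by (metis card.empty ex_in_conv of_nat_0 zero_neq_one)
  then have xy: "s x y = 1" and yx: "s y x = 1" using sym[of x y] by (auto simp: pos_nbrs_iff)
  have xV: "x \<in> V" and yV: "y \<in> V" and "x \<noteq> y" using x y xy by (auto simp: pos_nbrs_def)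
  have "pos_nbrs u - {x, y} \<subseteq> pos_nbrs (mate x) \<inter> pos_nbrs (mate y)"
    using pos_nbrs_diff_subset_if_a1[OF a x _ xy] pos_nbrs_diff_subset_if_a1[OF a _ x yx] y
    by (auto simp: insert_commute)
  then have "card (pos_nbrs u - {x, y}) \<le> card (pos_nbrs (mate x) \<inter> pos_nbrs (mate y))"
    by (intro card_mono) auto
  moreover have "card (pos_nbrs u - {x, y}) = 2"
    using card_pos_nbrs[OF u] x y \<open>x \<noteq> y\<close> by (simp add: card_Diff_subset)
  moreover have "s (mate x) (mate y) = 1"
    using mate_commute_if_a1[OF a xV mate_in_V[OF yV]] xy yV by simp
  ultimately have "2 \<le> a" using a_eq_card by fastforce
  then show False using a by simp
qed

subsection \<open>The case a = 2\<close>

lemma common_pos_nbrs_if_a2: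
  assumes a: "a = 2" and x: "x \<in> pos_nbrs u" and z: "z \<in> pos_nbrs u"
    and "x \<noteq> z" and xz: "s x z = 0"
  shows "pos_nbrs u \<inter> pos_nbrs x = pos_nbrs u - {x, z}"
proof (rule card_subset_eq)
  have "u \<in> V" using x adjacent_in_V[of u x] by (simp add: pos_nbrs_iff)
  then show "card (pos_nbrs u \<inter> pos_nbrs x) = card (pos_nbrs u - {x, z})"
    using a_eq_card[of u x] a card_pos_nbrs x z \<open>x \<noteq> z\<close>
    by (simp add: pos_nbrs_iff card_Diff_subset)
  show "pos_nbrs u \<inter> pos_nbrs x \<subseteq> pos_nbrs u - {x, z}"
    using xz by (auto simp: pos_nbrs_iff)
qed simp

lemma c_neg_if_a2: "a = 2 \<Longrightarrow> c < 0"
  using row_identity ten_le_n mult_nonneg_nonneg[of c "int n - 6"] by linarith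

lemma ex_non_adjacent_pos_nbr_if_a2:
  assumes a: "a = 2" and x: "x \<in> pos_nbrs u"
  shows "\<exists>z \<in> pos_nbrs u. z \<noteq> x \<and> s x z = 0"
proof -
  have u: "u \<in> V" and xV: "x \<in> V" and ux: "s u x = 1"
    using x adjacent_in_V[of u x] by (auto simp: pos_nbrs_iff)
  have "card (pos_nbrs u \<inter> pos_nbrs x) < card (pos_nbrs u - {x})"
    using a_eq_card[OF ux] a card_pos_nbrs[OF u] x by simp
  then have "\<not> pos_nbrs u - {x} \<subseteq> pos_nbrs u \<inter> pos_nbrs x"
    using card_mono[of "pos_nbrs u \<inter> pos_nbrs x" "pos_nbrs u - {x}"] by auto
  then obtain z where z: "z \<in> pos_nbrs u" "z \<noteq> x" "z \<notin> pos_nbrs x" by blast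
  have "z \<noteq> mate x"
    using mate_no_common_nbr[OF xV, of u] ux z(1) sym[of x u] sym[of u "mate x"]
    by (auto simp: pos_nbrs_iff)
  then have "s x z = 0"
    using z s_cases[of x z] neg_iff_mate[OF xV, of z] by (auto simp: pos_nbrs_iff)
  then show ?thesis using z by blast
qed

lemma a_neq_2: "a \<noteq> 2"
proof
  assume a: "a = 2"
  obtain u where u: "u \<in> V" using ex_vertex ..
  then obtain x where x: "x \<in> pos_nbrs u" using ex_pos_nbr by blast
  then obtain z where z: "z \<in> pos_nbrs u" "x \<noteq> z" and xz: "s x z = 0"
    using ex_non_adjacent_pos_nbr_if_a2[OF a] by metis
  have xV: "x \<in> V" and zV: "z \<in> V" using x z(1) by (simp_all add: pos_nbrs_def)
  have zx: "s z x = 0" using xz sym[of x z] by simp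
  have "pos_nbrs u - {x, z} \<subseteq> pos_nbrs x" "pos_nbrs u - {z, x} \<subseteq> pos_nbrs z"
    using common_pos_nbrs_if_a2[OF a x z xz] common_pos_nbrs_if_a2[OF a z(1) x z(2)[symmetric] zx]
    by blast+
  moreover have "u \<in> pos_nbrs x" "u \<in> pos_nbrs z"
    using x z(1) sym[of u x] sym[of u z] by (simp_all add: pos_nbrs_iff)
  ultimately have "insert u (pos_nbrs u - {x, z}) \<subseteq> pos_nbrs x \<inter> pos_nbrs z"
    by (auto simp: insert_commute)
  then have "card (insert u (pos_nbrs u - {x, z})) \<le> card (pos_nbrs x \<inter> pos_nbrs z)"
    by (intro card_mono) auto
  moreover have "card (insert u (pos_nbrs u - {x, z})) = 3"
    using card_pos_nbrs[OF u] x z by (simp add: card_Diff_subset pos_nbrs_iff)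
  ultimately have "1 \<le> A2 V s x z"
    using A2_eq_card[OF xV zV] z(2) by simp
  moreover have "A2 V s x z = c"
    using A2_param[OF xV zV] xz z(2) by simp
  ultimately show False using c_neg_if_a2[OF a] by simp
qed

subsection \<open>The case a = 3\<close>

definition closed_pos_nbrs :: "'a \<Rightarrow> 'a set" where
  "closed_pos_nbrs v = insert v (pos_nbrs v)"

lemma closed_pos_nbrs_subset_V: "v \<in> V \<Longrightarrow> closed_pos_nbrs v \<subseteq> V"
  unfolding closed_pos_nbrs_def pos_nbrs_def by auto

lemma card_closed_pos_nbrs: "v \<in> V \<Longrightarrow> card (closed_pos_nbrs v) = 5"
  using card_pos_nbrs unfolding closed_pos_nbrs_def by (simp add: pos_nbrs_iff)

lemma closed_pos_nbrs_eq_if_a3: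
  assumes a: "a = 3" and vw: "s v w = 1"
  shows "closed_pos_nbrs v = closed_pos_nbrs w"
proof -
  have v: "v \<in> V" and w: "w \<in> V" and wv: "s w v = 1"
    using vw adjacent_in_V[of v w] sym[of v w] by auto
  have "pos_nbrs v \<inter> pos_nbrs w = pos_nbrs v - {w}"
  proof (rule card_subset_eq)
    show "card (pos_nbrs v \<inter> pos_nbrs w) = card (pos_nbrs v - {w})"
      using a_eq_card[OF vw] a card_pos_nbrs[OF v] vw by (simp add: pos_nbrs_iff)
  qed (auto simp: pos_nbrs_iff)
  then have "closed_pos_nbrs v \<subseteq> closed_pos_nbrs w"
    using wv unfolding closed_pos_nbrs_def by (auto simp: pos_nbrs_iff)
  then show ?thesis
    using card_closed_pos_nbrs v w by (intro card_subset_eq) (auto simp: closed_pos_nbrs_def)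
qed

lemma closed_pos_nbrs_mem_if_a3:
  assumes "a = 3" and "w \<in> closed_pos_nbrs v"
  shows "closed_pos_nbrs w = closed_pos_nbrs v"
  using assms closed_pos_nbrs_eq_if_a3[of v w]
  by (cases "w = v") (auto simp: closed_pos_nbrs_def pos_nbrs_iff)

lemma pos_in_closed_pos_nbrs_if_a3:
  assumes "a = 3" and "x \<in> closed_pos_nbrs v" and "y \<in> closed_pos_nbrs v" and "x \<noteq> y"
  shows "s x y = 1"
  using closed_pos_nbrs_mem_if_a3[OF assms(1,2)] assms(3,4)
  by (auto simp: closed_pos_nbrs_def pos_nbrs_iff)

lemma closed_pos_nbrs_disjoint_if_a3:
  assumes "a = 3" and "v \<noteq> w" and "s v w \<noteq> 1"
  shows "closed_pos_nbrs v \<inter> closed_pos_nbrs w = {}"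
proof (rule ccontr)
  assume "closed_pos_nbrs v \<inter> closed_pos_nbrs w \<noteq> {}"
  then have "closed_pos_nbrs v = closed_pos_nbrs w"
    using closed_pos_nbrs_mem_if_a3[OF assms(1)] by blast
  then show False using assms(2,3) by (auto simp: closed_pos_nbrs_def pos_nbrs_iff)
qed

text \<open>For a = 3 the closed positive neighbourhoods partition V into cliques of size 5.\<close>
lemma five_dvd_n_if_a3:
  assumes a: "a = 3"
  shows "5 dvd n"
proof -
  have "5 * card (closed_pos_nbrs ` V) = card (\<Union> (closed_pos_nbrs ` V))"
  proof (rule card_partition)
    show "finite (\<Union> (closed_pos_nbrs ` V))"
      using closed_pos_nbrs_subset_V finite_V by (meson UN_least finite_subset)
    show "\<And>c1 c2. c1 \<in> closed_pos_nbrs ` V \<Longrightarrow> c2 \<in> closed_pos_nbrs ` V \<Longrightarrow> c1 \<noteq> c2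
        \<Longrightarrow> c1 \<inter> c2 = {}"
      using closed_pos_nbrs_mem_if_a3[OF a] by blast
  qed (use card_closed_pos_nbrs finite_V in auto)
  moreover have "\<Union> (closed_pos_nbrs ` V) = V"
    using closed_pos_nbrs_subset_V by (auto simp: closed_pos_nbrs_def)
  ultimately show ?thesis using card_V by (metis dvd_triv_left)
qed

lemma c_if_a3:
  assumes a: "a = 3" and u: "u \<in> V" and x: "x \<in> pos_nbrs u"
  shows "c = -1 - of_bool (mate u \<in> pos_nbrs (mate x))"
proof -
  have ux: "s u x = 1" and xV: "x \<in> V" and mx: "mate x \<in> V"
    using x mate_in_V by (auto simp: pos_nbrs_def)
  have "s u (mate x) = 0" "u \<noteq> mate x"
    using mate_no_common_nbr[OF xV, of u] mate_neg[OF xV] ux sym[of u x] sym[of u "mate x"]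
    by auto
  then have "A2 V s u (mate x) = c" using A2_param[OF u mx] by simp
  moreover have "pos_nbrs u \<inter> pos_nbrs (mate x) = {}"
  proof -
    have "pos_nbrs u \<subseteq> closed_pos_nbrs x"
      using closed_pos_nbrs_eq_if_a3[OF a ux] by (auto simp: closed_pos_nbrs_def)
    moreover have "w \<notin> pos_nbrs (mate x)" if "w \<in> closed_pos_nbrs x" for w
      using that mate_neg[OF xV] mate_no_common_nbr[OF xV, of w] sym[of x "mate x"]
      by (auto simp: closed_pos_nbrs_def pos_nbrs_iff)
    ultimately show ?thesis by blast
  qed
  ultimately show ?thesis
    using A2_eq_card[OF u mx] x xV \<open>u \<noteq> mate x\<close> by simp
qed

lemma n_c_if_a3:
  assumes a: "a = 3"
  shows "n = 10 \<and> c = -2"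
proof -
  obtain u where u: "u \<in> V" using ex_vertex ..
  then obtain x where "x \<in> pos_nbrs u"
    using ex_pos_nbr by blast
  then have "c = -1 \<or> c = -2" using c_if_a3[OF a u] by auto
  moreover have "c * (int n - 6) = -8" using row_identity a by simp
  ultimately have "(c = -1 \<and> n = 14) \<or> (c = -2 \<and> n = 10)" by auto
  then show ?thesis using five_dvd_n_if_a3[OF a] by auto
qed

lemma closed_pos_nbrs_mate_disjoint_if_a3:
  assumes "a = 3" and "u \<in> V"
  shows "closed_pos_nbrs u \<inter> closed_pos_nbrs (mate u) = {}"
  using closed_pos_nbrs_disjoint_if_a3[OF assms(1)] mate_neq[OF assms(2)] mate_neg[OF assms(2)]
  by simp

lemma mate_image_closed_pos_nbrs_if_a3:
  assumes a: "a = 3" and u: "u \<in> V"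
  shows "mate ` closed_pos_nbrs u = closed_pos_nbrs (mate u)"
proof (rule card_subset_eq)
  have "mate x \<in> pos_nbrs (mate u)" if "x \<in> pos_nbrs u" for x
    using c_if_a3[OF a u that] n_c_if_a3[OF a] sym[of "mate u" "mate x"]
    by (simp add: pos_nbrs_iff)
  then show "mate ` closed_pos_nbrs u \<subseteq> closed_pos_nbrs (mate u)"
    by (auto simp: closed_pos_nbrs_def)
  show "card (mate ` closed_pos_nbrs u) = card (closed_pos_nbrs (mate u))"
    using card_image[OF inj_on_mate[OF closed_pos_nbrs_subset_V[OF u]]]
      card_closed_pos_nbrs u mate_in_V[OF u]
    by simp
qed (simp add: closed_pos_nbrs_def)

lemma V_eq_closed_pos_nbrs_Un_if_a3:
  assumes a: "a = 3" and u: "u \<in> V"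
  shows "V = closed_pos_nbrs u \<union> closed_pos_nbrs (mate u)"
proof (rule card_subset_eq[OF finite_V, symmetric])
  show "closed_pos_nbrs u \<union> closed_pos_nbrs (mate u) \<subseteq> V"
    using closed_pos_nbrs_subset_V u mate_in_V[OF u] by auto
  show "card (closed_pos_nbrs u \<union> closed_pos_nbrs (mate u)) = card V"
    using closed_pos_nbrs_mate_disjoint_if_a3[OF a u] card_closed_pos_nbrs u mate_in_V[OF u]
      card_V n_c_if_a3[OF a]
      card_Un_disjoint[OF finite_subset[OF closed_pos_nbrs_subset_V finite_V]
        finite_subset[OF closed_pos_nbrs_subset_V finite_V]]
    by simp
qed

lemma S3_if_a3:
  assumes a: "a = 3"
  shows "sg_isomorphic V s V10 S3_10 \<and> n = 10 \<and> c = -2"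
proof -
  obtain u where u: "u \<in> V" using ex_vertex ..
  let ?X = "closed_pos_nbrs u"
  have X_V: "?X \<subseteq> V" using closed_pos_nbrs_subset_V[OF u] .
  have mate_X: "mate ` ?X = closed_pos_nbrs (mate u)"
    using mate_image_closed_pos_nbrs_if_a3[OF a u] .
  have disj: "?X \<inter> mate ` ?X = {}"
    using closed_pos_nbrs_mate_disjoint_if_a3[OF a u] mate_X by simp
  have "sg_isomorphic V s V10 (two_block_sg 1 0)"
  proof (rule sg_isomorphic_two_block)
    show "card ?X = 5" using card_closed_pos_nbrs[OF u] .
    show "inj_on mate ?X" using inj_on_mate[OF X_V] .
    show "V = ?X \<union> mate ` ?X" using V_eq_closed_pos_nbrs_Un_if_a3[OF a u] mate_X by simp
    show "s x y = 1" if "x \<in> ?X" "y \<in> ?X" "x \<noteq> y" for x y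
      using pos_in_closed_pos_nbrs_if_a3[OF a] that .
    show "s (mate x) (mate y) = 1" if "x \<in> ?X" "y \<in> ?X" "x \<noteq> y" for x y
      using pos_in_closed_pos_nbrs_if_a3[OF a, of "mate x" "mate u" "mate y"] mate_X that
        mate_eq_iff[of x y] X_V
      by auto
    show "s x (mate y) = (if x = y then -1 else 0)" if "x \<in> ?X" "y \<in> ?X" for x y
    proof -
      have "mate y \<notin> closed_pos_nbrs x"
        using closed_pos_nbrs_mem_if_a3[OF a that(1)] disj that(2) by blast
      then have "s x (mate y) \<noteq> 1" by (auto simp: closed_pos_nbrs_def pos_nbrs_iff)
      moreover have "x \<in> V" "y \<in> V" using X_V that by blast+
      ultimately show ?thesis
        using s_cases[of x "mate y"] neg_iff_mate[of x "mate y"] mate_eq_iff[of y x] by auto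
    qed
  qed (use signed_graph disj in auto)
  then show ?thesis using S3_10_eq_two_block n_c_if_a3[OF a] by simp
qed

end

theorem mainTheorem3:
  fixes V :: "'a set" and s :: "'a \<Rightarrow> 'a \<Rightarrow> int"
    and n r :: nat and a b c :: int
  assumes "SRSG V s n r a b c"
    and "sg_connected V s"
    and "\<not> sg_complete V s"
    and "regular V s 5"
    and "net_regular V s 3"
    and "class_C1 V s a b c \<or> class_C4 V s a b c \<or> class_C5 V s a b c"
    and "\<not> has_unbalanced_triangle V s"
  shows "(sg_isomorphic V s V10 S2_10 \<and> (n, r, a, b, c) = (10, 5, 0, 0, 1))
       \<or> (sg_isomorphic V s V10 S3_10 \<and> (n, r, a, b, c) = (10, 5, 3, 0, -2))"
proof -
  interpret deg5_net3_srsg V s n r a b c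
    using assms(1,4,5,7) by unfold_locales (auto simp: SRSG_def)
  consider "a = 0" | "a = 3" using a_bounds a_neq_1 a_neq_2 by linarith
  then show ?thesis
  proof cases
    case 1
    then show ?thesis using S2_if_a0 r_eq b_eq by simp
  next
    case 2
    then show ?thesis using S3_if_a3 r_eq b_eq by simp
  qed
qed

end
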